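(* In the setting of the context, fix $\alpha\in G_F$, and let $U\in\mathrm{Bis}(G)$ and $n\in C_0(U)$ satisfy $\alpha\in U$ and $n(\alpha)\neq0$. Then $|\varphi(n)(\Phi(\alpha))|=|n(\alpha)|$, and the value $\varphi(n)(\Phi(\alpha))/n(\alpha)\in\mathbb{T}$ does not depend on the choice of $U$ and $n$.
   Context: $G$ is an étale groupoid, $H$ an effective étale groupoid (étale groupoids are locally compact Hausdorff with $d$ a local homeomorphism; effective means the interior of the isotropy equals the unit space), $\varphi\colon C^*_r(G)\to C^*_r(H)$ a *-homomorphism of reduced groupoid C*-algebras with $\varphi(C_0(G^{(0)}))\subset C_0(H^{(0)})$ an ideal of $C_0(H^{(0)})$. Elements of $C^*_r$ are regarded as functions on the groupoid via the standard evaluation map. $\mathrm{Bis}(G)$ is the set of open bisections and $C_0(U)$ the closure of $C_c(U)$ in $C^*_r(G)$. $F\subset G^{(0)}$ is the closed invariant set with $\ker\varphi\cap C_0(G^{(0)})=C_0(G^{(0)}\setminus F)$, $G_F=d^{-1}(F)$. $\psi\colon\mathrm{Bis}(G)\to\mathrm{Bis}(H)$ is the semigroup homomorphism with $\varphi(C_0(U))=C_0(\psi(U))$. $\sigma\colon F\to H^{(0)}$ is the homeomorphism onto the open set $V$ with $\varphi(C_0(G^{(0)}))=C_0(V)$ determined by $\varphi(f)(\sigma(x))=f(x)$ for $f\in C_0(G^{(0)})$, $x\in F$. $\Phi\colon G_F\to H$ is the groupoid homomorphism given by: for $\alpha\in G_F$ and any $U\in\mathrm{Bis}(G)$ with $\alpha\in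 U$, $\Phi(\alpha)$ is the unique $\delta\in\psi(U)$ with $d(\delta)=\sigma(d(\alpha))$ (this exists and is independent of $U$). *)

theory Defs
  imports "HOL-Analysis.Analysis"
begin

section \<open>Topological groupoids (the topology of the groupoid is the topology of the type)\<close>

record 'a groupoid =
  gunits :: "'a set"
  gdom   :: "'a \<Rightarrow> 'a"
  gran   :: "'a \<Rightarrow> 'a"
  gmult  :: "'a \<Rightarrow> 'a \<Rightarrow> 'a"
  ginv   :: "'a \<Rightarrow> 'a"

definition groupoid :: "('a, 'm) groupoid_scheme \<Rightarrow> bool" where
  "groupoid G \<longleftrightarrow>
     (\<forall>g. gdom G g \<in> gunits G \<and> gran G g \<in> gunits G) \<and>
     (\<forall>u\<in>gunits G. gdom G u = u \<and> gran G u = u) \<and>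
     (\<forall>g h. gdom G g = gran G h \<longrightarrow>
        gdom G (gmult G g h) = gdom G h \<and> gran G (gmult G g h) = gran G g) \<and>
     (\<forall>g h k. gdom G g = gran G h \<longrightarrow> gdom G h = gran G k \<longrightarrow>
        gmult G (gmult G g h) k = gmult G g (gmult G h k)) \<and>
     (\<forall>g. gmult G g (gdom G g) = g \<and> gmult G (gran G g) g = g) \<and>
     (\<forall>g. gdom G (ginv G g) = gran G g \<and> gran G (ginv G g) = gdom G g \<and>
          gmult G g (ginv G g) = gran G g \<and> gmult G (ginv G g) g = gdom G g)"

text \<open>Etale groupoid: locally compact Hausdorff topological groupoid whose source map d is a
  local homeomorphism. Hausdorffness is imposed by the type class t2_space.\<close>
definition etale_groupoid :: "('a::t2_space, 'm) groupoid_scheme \<Rightarrow> bool" where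
  "etale_groupoid G \<longleftrightarrow>
     groupoid G \<and>
     locally_compact_space (euclidean :: 'a topology) \<and>
     continuous_on UNIV (gdom G) \<and> continuous_on UNIV (gran G) \<and>
     continuous_on UNIV (ginv G) \<and>
     continuous_on {(g, h). gdom G g = gran G h} (\<lambda>(g, h). gmult G g h) \<and>
     (\<forall>g. \<exists>U. open U \<and> g \<in> U \<and> open (gdom G ` U) \<and>
            (\<exists>e. homeomorphism U (gdom G ` U) (gdom G) e))"

definition effective :: "('a::topological_space, 'm) groupoid_scheme \<Rightarrow> bool" where
  "effective G \<longleftrightarrow> interior {g. gdom G g = gran G g} = gunits G"

definition Bis :: "('a::topological_space, 'm) groupoid_scheme \<Rightarrow> 'a set set" where
  "Bis G = {U. open U \<and> inj_on (gdom G) U \<and> inj_on (gran G) U}"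

definition Cc_on :: "'a::topological_space set \<Rightarrow> ('a \<Rightarrow> complex) set" where
  "Cc_on U = {f. continuous_on UNIV f \<and> compact (closure {x. f x \<noteq> 0}) \<and>
                 closure {x. f x \<noteq> 0} \<subseteq> U}"

text \<open>Left regular representation at a unit x on l2(G_x), G_x = d^{-1}(x).\<close>
definition lreg :: "('a, 'm) groupoid_scheme \<Rightarrow> ('a \<Rightarrow> complex) \<Rightarrow> ('a \<Rightarrow> complex) \<Rightarrow> 'a \<Rightarrow> complex" where
  "lreg G f \<xi> \<gamma> = (\<Sum>\<^sub>\<infinity>\<eta>\<in>{\<eta>. gdom G \<eta> = gdom G \<gamma>}. f (gmult G \<gamma> (ginv G \<eta>)) * \<xi> \<eta>)"

definition l2norm :: "'a set \<Rightarrow> ('a \<Rightarrow> complex) \<Rightarrow> real" where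
  "l2norm S \<xi> = sqrt (\<Sum>\<^sub>\<infinity>\<eta>\<in>S. (cmod (\<xi> \<eta>))\<^sup>2)"

definition in_l2 :: "'a set \<Rightarrow> ('a \<Rightarrow> complex) \<Rightarrow> bool" where
  "in_l2 S \<xi> \<longleftrightarrow> (\<lambda>\<eta>. (cmod (\<xi> \<eta>))\<^sup>2) summable_on S"

definition lreg_norm :: "('a, 'm) groupoid_scheme \<Rightarrow> ('a \<Rightarrow> complex) \<Rightarrow> 'a \<Rightarrow> real" where
  "lreg_norm G f x = Sup {l2norm {\<gamma>. gdom G \<gamma> = x} (lreg G f \<xi>) | \<xi>.
       in_l2 {\<eta>. gdom G \<eta> = x} \<xi> \<and> l2norm {\<eta>. gdom G \<eta> = x} \<xi> \<le> 1}"

text \<open>Reduced norm (meaningful on C_c(G)).\<close>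
definition rnorm :: "('a, 'm) groupoid_scheme \<Rightarrow> ('a \<Rightarrow> complex) \<Rightarrow> real" where
  "rnorm G f = Sup (lreg_norm G f ` gunits G)"

text \<open>C_0(U) for an open set U: the closure of C_c(U) in the reduced C*-algebra, each element
  being identified with its image under the (injective) evaluation map j, i.e. with the
  pointwise (indeed uniform) limit of an approximating sequence.\<close>
definition C0 :: "('a::topological_space, 'm) groupoid_scheme \<Rightarrow> 'a set \<Rightarrow> ('a \<Rightarrow> complex) set" where
  "C0 G U = {f. \<exists>s. (\<forall>n. s n \<in> Cc_on U) \<and>
                   (\<forall>e>0. \<exists>N. \<forall>m\<ge>N. \<forall>n\<ge>N. rnorm G (\<lambda>\<gamma>. s m \<gamma> - s n \<gamma>) < e) \<and>
                   (\<forall>\<gamma>. (\<lambda>n. s n \<gamma>) \<longlonglongrightarrow> f \<gamma>)}"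

abbreviation Cr :: "('a::topological_space, 'm) groupoid_scheme \<Rightarrow> ('a \<Rightarrow> complex) set" where
  "Cr G \<equiv> C0 G UNIV"

definition conv :: "('a, 'm) groupoid_scheme \<Rightarrow> ('a \<Rightarrow> complex) \<Rightarrow> ('a \<Rightarrow> complex) \<Rightarrow> 'a \<Rightarrow> complex" where
  "conv G a b \<gamma> = (\<Sum>\<^sub>\<infinity>\<eta>\<in>{\<eta>. gran G \<eta> = gran G \<gamma>}. a \<eta> * b (gmult G (ginv G \<eta>) \<gamma>))"

definition cstar :: "('a, 'm) groupoid_scheme \<Rightarrow> ('a \<Rightarrow> complex) \<Rightarrow> 'a \<Rightarrow> complex" where
  "cstar G a \<gamma> = cnj (a (ginv G \<gamma>))"

definition star_hom ::
  "('a::topological_space, 'm) groupoid_scheme \<Rightarrow> ('b::topological_space, 'n) groupoid_scheme \<Rightarrow>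
   (('a \<Rightarrow> complex) \<Rightarrow> ('b \<Rightarrow> complex)) \<Rightarrow> bool" where
  "star_hom G H \<phi> \<longleftrightarrow>
     (\<forall>a\<in>Cr G. \<phi> a \<in> Cr H) \<and>
     (\<forall>a\<in>Cr G. \<forall>b\<in>Cr G. \<phi> (\<lambda>\<gamma>. a \<gamma> + b \<gamma>) = (\<lambda>\<delta>. \<phi> a \<delta> + \<phi> b \<delta>)) \<and>
     (\<forall>a\<in>Cr G. \<forall>c. \<phi> (\<lambda>\<gamma>. c * a \<gamma>) = (\<lambda>\<delta>. c * \<phi> a \<delta>)) \<and>
     (\<forall>a\<in>Cr G. \<forall>b\<in>Cr G. \<phi> (conv G a b) = conv H (\<phi> a) (\<phi> b)) \<and>
     (\<forall>a\<in>Cr G. \<phi> (cstar G a) = cstar H (\<phi> a))"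

end

theory Submission
  imports Defs
begin

text \<open>Squaring a function supported on an open bisection U is local: cstar n * n lives on the
  unit space and its value at d(\<beta>) is |n(\<beta>)|^2 for \<beta> \<in> U.  On the C*-algebra side,
  elements supported on bisections have reduced norm equal to their sup norm, so C_0(U)
  consists of uniform limits of functions in C_c(U), and this identity passes to
  C_0(U).  Applying \<phi>, whose image of cstar n * n is evaluated at \<sigma>(d \<alpha>) = d(\<Phi> \<alpha>) and of
  n is supported on the bisection \<psi>(U), gives |\<phi>(n)(\<Phi> \<alpha>)|^2 = |n(\<alpha>)|^2.  Applied to the
  combination n'(\<alpha>) n - n(\<alpha>) n', which vanishes at \<alpha>, the same identity shows
  \<phi>(n)(\<Phi> \<alpha>) / n(\<alpha>) = \<phi>(n')(\<Phi> \<alpha>) / n'(\<alpha>) for n, n' on a common bisection; two arbitrary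
  bisections are reduced to their intersection by a cutoff function at \<alpha>.\<close>

lemma exists_cutoff_function:
  fixes W :: "'a::t2_space set"
  assumes lc: "locally_compact_space (euclidean :: 'a topology)" and W: "open W" "a \<in> W"
  obtains k :: "'a \<Rightarrow> real" where "continuous_on UNIV k" "k a = 1" "\<And>x. \<bar>k x\<bar> \<le> 1"
    "compact (closure {x. k x \<noteq> 0})" "closure {x. k x \<noteq> 0} \<subseteq> W"
proof -
  have H: "Hausdorff_space (euclidean :: 'a topology)"
    unfolding Hausdorff_space_def disjnt_def using hausdorff by auto
  have CR: "completely_regular_space (euclidean :: 'a topology)"
    using locally_compact_regular_imp_completely_regular_space lc H by blast
  obtain V K where VK: "open V" "compact K" "a \<in> V" "V \<subseteq> K" "K \<subseteq> W"
  proof -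
    have "neighbourhood_base_of (compactin euclidean) (euclidean :: 'a topology)"
      using locally_compact_space_neighbourhood_base H lc by blast
    then obtain V K where "openin euclidean V" "compactin euclidean K" "a \<in> V" "V \<subseteq> K" "K \<subseteq> W"
      using W unfolding neighbourhood_base_of by (metis open_openin)
    then show ?thesis by (intro that[of V K]) (simp_all add: compactin_euclidean_iff)
  qed
  obtain f :: "'a \<Rightarrow> real" where f: "continuous_map euclidean (top_of_set {0..1}) f"
      "f a = 0" "f ` (- V) \<subseteq> {1}"
  proof -
    have "closedin euclidean (- V)" using VK(1) by (simp add: closed_closedin[symmetric] open_closed)
    moreover have "a \<in> topspace euclidean - (- V)" using VK(3) by simp
    ultimately show ?thesis using CR that unfolding completely_regular_space_def by blast
  qed
  have fc: "continuous_on UNIV f" and f01: "\<And>x. f x \<in> {0..1}"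
    using f(1) by (auto simp: continuous_map_in_subtopology)
  define k where "k x = 1 - f x" for x
  have "{x. k x \<noteq> 0} \<subseteq> K" using f(3) VK(4) by (auto simp: k_def)
  then have cl: "closure {x. k x \<noteq> 0} \<subseteq> K"
    by (rule closure_minimal) (rule compact_imp_closed[OF VK(2)])
  show ?thesis
  proof
    show "continuous_on UNIV k" unfolding k_def by (intro continuous_intros fc)
    show "k a = 1" by (simp add: k_def f(2))
    show "\<bar>k x\<bar> \<le> 1" for x using f01[of x] by (auto simp: k_def)
    show "compact (closure {x. k x \<noteq> 0})"
      using compact_Int_closed[OF VK(2) closed_closure[of "{x. k x \<noteq> 0}"]] cl by (simp add: Int_absorb1)
    show "closure {x. k x \<noteq> 0} \<subseteq> W" using cl VK(5) by blast
  qed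
qed

lemma l2_bound_by_injective_majorant:
  fixes g \<xi> :: "'a \<Rightarrow> complex"
  assumes h: "inj_on h P" "h ` P \<subseteq> S" and PS: "P \<subseteq> S"
    and g_le: "\<And>\<gamma>. \<gamma> \<in> P \<Longrightarrow> cmod (g \<gamma>) \<le> M * cmod (\<xi> (h \<gamma>))"
    and g_0: "\<And>\<gamma>. \<gamma> \<in> S - P \<Longrightarrow> g \<gamma> = 0"
    and \<xi>: "in_l2 S \<xi>"
  shows "in_l2 S g \<and> (\<Sum>\<^sub>\<infinity>\<gamma>\<in>S. (cmod (g \<gamma>))\<^sup>2) \<le> M\<^sup>2 * (\<Sum>\<^sub>\<infinity>\<eta>\<in>S. (cmod (\<xi> \<eta>))\<^sup>2)"
proof -
  let ?q = "\<lambda>\<eta>. (cmod (\<xi> \<eta>))\<^sup>2" and ?g = "\<lambda>\<gamma>. (cmod (g \<gamma>))\<^sup>2"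
  have q_S: "?q summable_on S" using \<xi> unfolding in_l2_def .
  have q_hP: "?q summable_on h ` P" using summable_on_subset[OF q_S h(2)] .
  have qh: "(?q \<circ> h) summable_on P" using q_hP summable_on_reindex[OF h(1)] by blast
  have Mqh: "(\<lambda>\<gamma>. M\<^sup>2 * (?q \<circ> h) \<gamma>) summable_on P" by (rule summable_on_cmult_right[OF qh])
  have g_sq: "?g \<gamma> \<le> M\<^sup>2 * (?q \<circ> h) \<gamma>" if "\<gamma> \<in> P" for \<gamma>
    using power_mono[OF g_le[OF that] norm_ge_zero, of 2] by (simp add: power_mult_distrib)
  have g_P: "?g summable_on P" by (rule summable_on_comparison_test[OF Mqh]) (use g_sq in auto)
  have g_S: "?g summable_on S \<longleftrightarrow> ?g summable_on P" and "infsum ?g S = infsum ?g P"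
    by (intro summable_on_cong_neutral infsum_cong_neutral; use g_0 PS in auto)+
  moreover have "infsum ?g P \<le> M\<^sup>2 * infsum ?q S"
  proof -
    have "infsum ?g P \<le> infsum (\<lambda>\<gamma>. M\<^sup>2 * (?q \<circ> h) \<gamma>) P" by (rule infsum_mono[OF g_P Mqh g_sq])
    also have "\<dots> = M\<^sup>2 * infsum (?q \<circ> h) P" by (rule infsum_cmult_right[OF qh])
    also have "\<dots> = M\<^sup>2 * infsum ?q (h ` P)" by (simp add: infsum_reindex[OF h(1)])
    also have "\<dots> \<le> M\<^sup>2 * infsum ?q S" by (intro mult_left_mono infsum_mono2[OF q_hP q_S h(2)]) simp_all
    finally show ?thesis .
  qed
  ultimately show ?thesis using g_P unfolding in_l2_def by simp
qed

locale groupoid_laws =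
  fixes G :: "('a::t2_space, 'm) groupoid_scheme"
  assumes groupoid: "groupoid G"
begin

abbreviation "d \<equiv> gdom G"
abbreviation "r \<equiv> gran G"
abbreviation "mul \<equiv> gmult G"
abbreviation "iv \<equiv> ginv G"

lemma d_in_units [simp]: "d g \<in> gunits G" and r_in_units [simp]: "r g \<in> gunits G"
  using groupoid unfolding groupoid_def by auto

lemma d_unit: "u \<in> gunits G \<Longrightarrow> d u = u" and r_unit: "u \<in> gunits G \<Longrightarrow> r u = u"
  using groupoid unfolding groupoid_def by auto

lemma d_d [simp]: "d (d g) = d g" and r_d [simp]: "r (d g) = d g"
  and d_r [simp]: "d (r g) = r g" and r_r [simp]: "r (r g) = r g"
  using d_unit r_unit by auto

lemma d_mul: "d g = r h \<Longrightarrow> d (mul g h) = d h" and r_mul: "d g = r h \<Longrightarrow> r (mul g h) = r g"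
  using groupoid unfolding groupoid_def by auto

lemma mul_assoc: "d g = r h \<Longrightarrow> d h = r k \<Longrightarrow> mul (mul g h) k = mul g (mul h k)"
  using groupoid unfolding groupoid_def by blast

lemma mul_d [simp]: "mul g (d g) = g" and mul_r [simp]: "mul (r g) g = g"
  using groupoid unfolding groupoid_def by auto

lemma d_iv [simp]: "d (iv g) = r g" and r_iv [simp]: "r (iv g) = d g"
  and mul_iv [simp]: "mul g (iv g) = r g" and iv_mul [simp]: "mul (iv g) g = d g"
  using groupoid unfolding groupoid_def by auto

lemma iv_iv [simp]: "iv (iv g) = g"
proof -
  have "iv (iv g) = mul (iv (iv g)) (mul (iv g) g)" by (metis mul_d d_iv r_iv iv_mul)
  also have "\<dots> = mul (mul (iv (iv g)) (iv g)) g" by (rule mul_assoc[symmetric]) simp_all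
  finally show ?thesis by simp
qed

lemma mul_left_cancel:
  assumes "d a = r b" "d a = r c" "mul a b = mul a c" shows "b = c"
proof -
  have "b = mul (mul (iv a) a) b" using assms by simp
  also have "\<dots> = mul (iv a) (mul a c)" by (subst mul_assoc) (use assms in simp_all)
  also have "\<dots> = mul (mul (iv a) a) c" by (rule mul_assoc[symmetric]) (use assms in simp_all)
  also have "\<dots> = c" using assms(2) by (metis iv_mul mul_r)
  finally show ?thesis .
qed

end

section \<open>The regular representation on bisections\<close>

definition bisection :: "('a, 'm) groupoid_scheme \<Rightarrow> 'a set \<Rightarrow> bool" where
  "bisection G B \<longleftrightarrow> inj_on (gdom G) B \<and> inj_on (gran G) B"

lemma Bis_imp_bisection: "U \<in> Bis G \<Longrightarrow> bisection G U"
  unfolding Bis_def bisection_def by simp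

context groupoid_laws begin

lemma bisection_units: "bisection G (gunits G)"
  unfolding bisection_def inj_on_def using d_unit r_unit by metis

lemma bisection_iv_image: "bisection G B \<Longrightarrow> bisection G (iv ` B)"
  unfolding bisection_def inj_on_def by (simp add: image_iff) metis

lemma lreg_bisection:
  assumes B: "bisection G B" and f_0: "\<And>x. x \<notin> B \<Longrightarrow> f x = 0"
    and b: "b \<in> B" "r b = r \<gamma>"
  shows "lreg G f \<xi> \<gamma> = f b * \<xi> (mul (iv b) \<gamma>)"
proof -
  define e where "e = mul (iv b) \<gamma>"
  have de: "d e = d \<gamma>" and re: "r e = d b" unfolding e_def using b(2) by (simp_all add: d_mul r_mul)
  have be: "mul b e = \<gamma>"
  proof -
    have "mul b e = mul (mul b (iv b)) \<gamma>" unfolding e_def by (rule mul_assoc[symmetric]) (simp_all add: b)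
    then show ?thesis by (simp add: b)
  qed
  have ge: "mul \<gamma> (iv e) = b"
  proof -
    have "mul \<gamma> (iv e) = mul b (mul e (iv e))" unfolding be[symmetric] by (rule mul_assoc) (simp_all add: re)
    then show ?thesis by (simp add: re)
  qed
  have "f (mul \<gamma> (iv \<eta>)) * \<xi> \<eta> = 0" if "d \<eta> = d \<gamma>" "\<eta> \<noteq> e" for \<eta>
  proof (cases "mul \<gamma> (iv \<eta>) \<in> B")
    case True
    have "r (mul \<gamma> (iv \<eta>)) = r \<gamma>" by (rule r_mul) (simp add: that)
    then have eqb: "mul \<gamma> (iv \<eta>) = b"
      using B True b unfolding bisection_def inj_on_def by metis
    have d_b: "d b = r \<eta>" using eqb d_mul[of \<gamma> "iv \<eta>"] that by simp
    have "mul b \<eta> = mul \<gamma> (mul (iv \<eta>) \<eta>)" unfolding eqb[symmetric] by (rule mul_assoc) (simp_all add: that)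
    also have "\<dots> = mul b e" using that by (simp add: be)
    finally have "\<eta> = e" by (rule mul_left_cancel[rotated 2]) (simp_all add: d_b re)
    with that show ?thesis by simp
  qed (simp add: f_0)
  then have "lreg G f \<xi> \<gamma> = (\<Sum>\<^sub>\<infinity>\<eta>\<in>{e}. f (mul \<gamma> (iv \<eta>)) * \<xi> \<eta>)"
    unfolding lreg_def by (intro infsum_cong_neutral) (use de in auto)
  also have "\<dots> = f b * \<xi> e" by (simp add: ge)
  finally show ?thesis by (simp add: e_def)
qed

lemma lreg_off_bisection:
  assumes f_0: "\<And>x. x \<notin> B \<Longrightarrow> f x = 0" and no_b: "\<not> (\<exists>b\<in>B. r b = r \<gamma>)"
  shows "lreg G f \<xi> \<gamma> = 0"
proof -
  have "mul \<gamma> (iv \<eta>) \<notin> B" if "d \<eta> = d \<gamma>" for \<eta>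
    using no_b r_mul[of \<gamma> "iv \<eta>"] that by auto
  then show ?thesis unfolding lreg_def using f_0 by (intro infsum_0) auto
qed

lemma lreg_bisection_l2:
  assumes B: "bisection G B" and f_0: "\<And>z. z \<notin> B \<Longrightarrow> f z = 0"
    and M: "\<And>z. cmod (f z) \<le> M" and \<xi>: "in_l2 {\<eta>. d \<eta> = x} \<xi>"
  shows "in_l2 {\<eta>. d \<eta> = x} (lreg G f \<xi>) \<and>
    (\<Sum>\<^sub>\<infinity>\<gamma>\<in>{\<eta>. d \<eta> = x}. (cmod (lreg G f \<xi> \<gamma>))\<^sup>2) \<le> M\<^sup>2 * (\<Sum>\<^sub>\<infinity>\<eta>\<in>{\<eta>. d \<eta> = x}. (cmod (\<xi> \<eta>))\<^sup>2)"
proof -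
  let ?S = "{\<eta>. d \<eta> = x}"
  define P where "P = {\<gamma>\<in>?S. \<exists>b\<in>B. r b = r \<gamma>}"
  define b where "b \<gamma> = (SOME b. b \<in> B \<and> r b = r \<gamma>)" for \<gamma>
  define h where "h \<gamma> = mul (iv (b \<gamma>)) \<gamma>" for \<gamma>
  have b: "b \<gamma> \<in> B \<and> r (b \<gamma>) = r \<gamma>" if "\<gamma> \<in> P" for \<gamma>
    using that unfolding P_def b_def by (metis (mono_tags, lifting) mem_Collect_eq)
  have dh: "d (h \<gamma>) = d \<gamma>" and rh: "r (h \<gamma>) = d (b \<gamma>)" if "\<gamma> \<in> P" for \<gamma>
    unfolding h_def using b[OF that] by (simp_all add: d_mul r_mul)
  have "inj_on h P"
  proof (rule inj_onI)
    fix \<gamma> \<gamma>' assume \<gamma>: "\<gamma> \<in> P" "\<gamma>' \<in> P" and eq: "h \<gamma> = h \<gamma>'"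
    have "d (b \<gamma>) = d (b \<gamma>')" using rh[OF \<gamma>(1)] rh[OF \<gamma>(2)] eq by simp
    then have bb: "b \<gamma> = b \<gamma>'" using B b[OF \<gamma>(1)] b[OF \<gamma>(2)] unfolding bisection_def inj_on_def by blast
    have "mul (iv (b \<gamma>)) \<gamma> = mul (iv (b \<gamma>)) \<gamma>'" using eq bb unfolding h_def by simp
    then show "\<gamma> = \<gamma>'" by (rule mul_left_cancel[rotated 2]) (use b[OF \<gamma>(1)] b[OF \<gamma>(2)] bb in simp_all)
  qed
  moreover have "h ` P \<subseteq> ?S" "P \<subseteq> ?S" using dh unfolding P_def by auto
  moreover have "cmod (lreg G f \<xi> \<gamma>) \<le> M * cmod (\<xi> (h \<gamma>))" if "\<gamma> \<in> P" for \<gamma>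
  proof -
    have "lreg G f \<xi> \<gamma> = f (b \<gamma>) * \<xi> (h \<gamma>)"
      unfolding h_def by (rule lreg_bisection[OF B f_0]) (use b[OF that] in auto)
    then show ?thesis by (simp add: norm_mult mult_right_mono M)
  qed
  moreover have "lreg G f \<xi> \<gamma> = 0" if "\<gamma> \<in> ?S - P" for \<gamma>
    by (rule lreg_off_bisection[of B]) (use f_0 that in \<open>auto simp: P_def\<close>)
  ultimately show ?thesis using l2_bound_by_injective_majorant[OF _ _ _ _ _ \<xi>] by blast
qed

lemma l2norm_lreg_bisection_le:
  assumes B: "bisection G B" and f_0: "\<And>z. z \<notin> B \<Longrightarrow> f z = 0"
    and M: "\<And>z. cmod (f z) \<le> M"
    and \<xi>: "in_l2 {\<eta>. d \<eta> = x} \<xi>" "l2norm {\<eta>. d \<eta> = x} \<xi> \<le> 1"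
  shows "l2norm {\<eta>. d \<eta> = x} (lreg G f \<xi>) \<le> M"
proof -
  let ?S = "{\<eta>. d \<eta> = x}"
  have M0: "0 \<le> M" using M[of undefined] norm_ge_zero order_trans by blast
  have "infsum (\<lambda>\<eta>. (cmod (\<xi> \<eta>))\<^sup>2) ?S \<le> 1"
    using \<xi>(2) infsum_nonneg[of ?S "\<lambda>\<eta>. (cmod (\<xi> \<eta>))\<^sup>2"] unfolding l2norm_def
    by (metis real_sqrt_le_1_iff zero_le_power2)
  then have "infsum (\<lambda>\<gamma>. (cmod (lreg G f \<xi> \<gamma>))\<^sup>2) ?S \<le> M\<^sup>2"
    using lreg_bisection_l2[where f=f, OF B f_0 M \<xi>(1)] by (meson mult_left_le order_trans zero_le_power2)
  then have "l2norm ?S (lreg G f \<xi>) \<le> sqrt (M\<^sup>2)" unfolding l2norm_def by (rule real_sqrt_le_mono)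
  then show ?thesis using M0 by simp
qed

lemma lreg_norm_bisection_le:
  assumes B: "bisection G B" and f_0: "\<And>z. z \<notin> B \<Longrightarrow> f z = 0"
    and M: "\<And>z. cmod (f z) \<le> M"
  shows "lreg_norm G f x \<le> M"
proof -
  let ?S = "{\<eta>. d \<eta> = x}"
  have "in_l2 ?S (\<lambda>_. 0) \<and> l2norm ?S (\<lambda>_. 0) \<le> 1" by (simp add: in_l2_def l2norm_def)
  then have "{l2norm ?S (lreg G f \<xi>) | \<xi>. in_l2 ?S \<xi> \<and> l2norm ?S \<xi> \<le> 1} \<noteq> {}" by blast
  then show ?thesis
    unfolding lreg_norm_def using l2norm_lreg_bisection_le[where f=f, OF B f_0 M] by (intro cSup_least) blast+
qed

lemma rnorm_bisection_le:
  assumes B: "bisection G B" and f_0: "\<And>z. z \<notin> B \<Longrightarrow> f z = 0"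
    and M: "\<And>z. cmod (f z) \<le> M"
  shows "rnorm G f \<le> M"
proof -
  have "gunits G \<noteq> {}" using d_in_units by blast
  then show ?thesis
    unfolding rnorm_def using lreg_norm_bisection_le[where f=f, OF B f_0 M] by (intro cSup_least) auto
qed

text \<open>Testing the regular representation at d(b) on the point mass at d(b) recovers f(b).\<close>

lemma norm_le_rnorm_bisection:
  assumes B: "bisection G B" and f_0: "\<And>z. z \<notin> B \<Longrightarrow> f z = 0"
    and M: "\<And>z. cmod (f z) \<le> M" and b: "b \<in> B"
  shows "cmod (f b) \<le> rnorm G f"
proof -
  define x where "x = d b"
  let ?S = "{\<eta>. d \<eta> = x}"
  define \<xi> :: "'a \<Rightarrow> complex" where "\<xi> \<eta> = (if \<eta> = x then 1 else 0)" for \<eta>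
  have xS: "x \<in> ?S" and bS: "b \<in> ?S" by (simp_all add: x_def)
  have \<xi>_l2: "in_l2 ?S \<xi>" unfolding in_l2_def
    by (subst summable_on_cong_neutral[where T="{x}" and g="\<lambda>\<eta>. (cmod (\<xi> \<eta>))\<^sup>2"])
      (use xS in \<open>auto simp: \<xi>_def\<close>)
  have "infsum (\<lambda>\<eta>. (cmod (\<xi> \<eta>))\<^sup>2) ?S = infsum (\<lambda>\<eta>. (cmod (\<xi> \<eta>))\<^sup>2) {x}"
    by (rule infsum_cong_neutral) (use xS in \<open>auto simp: \<xi>_def\<close>)
  then have \<xi>_norm: "l2norm ?S \<xi> \<le> 1" unfolding l2norm_def by (simp add: \<xi>_def)
  have "lreg G f \<xi> b = f b"
    by (subst lreg_bisection[where f=f, OF B f_0 b]) (auto simp: \<xi>_def x_def)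
  moreover have "(\<lambda>\<gamma>. (cmod (lreg G f \<xi> \<gamma>))\<^sup>2) summable_on ?S"
    using lreg_bisection_l2[where f=f, OF B f_0 M \<xi>_l2] unfolding in_l2_def by blast
  ultimately have "(cmod (f b))\<^sup>2 \<le> infsum (\<lambda>\<gamma>. (cmod (lreg G f \<xi> \<gamma>))\<^sup>2) ?S"
    using finite_sum_le_infsum[of "\<lambda>\<gamma>. (cmod (lreg G f \<xi> \<gamma>))\<^sup>2" ?S "{b}"] bS by simp
  then have "cmod (f b) \<le> l2norm ?S (lreg G f \<xi>)"
    unfolding l2norm_def by (metis norm_ge_zero real_le_rsqrt)
  also have "\<dots> \<le> lreg_norm G f x"
    unfolding lreg_norm_def
  proof (rule cSup_upper)
    show "l2norm ?S (lreg G f \<xi>) \<in> {l2norm ?S (lreg G f \<xi>) | \<xi>. in_l2 ?S \<xi> \<and> l2norm ?S \<xi> \<le> 1}"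
      using \<xi>_l2 \<xi>_norm by blast
    show "bdd_above {l2norm ?S (lreg G f \<xi>) | \<xi>. in_l2 ?S \<xi> \<and> l2norm ?S \<xi> \<le> 1}"
      using l2norm_lreg_bisection_le[where f=f, OF B f_0 M] by (intro bdd_aboveI[where M=M]) blast
  qed
  also have "\<dots> \<le> rnorm G f"
    unfolding rnorm_def
  proof (rule cSup_upper)
    show "lreg_norm G f x \<in> lreg_norm G f ` gunits G" by (simp add: x_def)
    show "bdd_above (lreg_norm G f ` gunits G)"
      using lreg_norm_bisection_le[where f=f, OF B f_0 M] by (intro bdd_aboveI2) blast
  qed
  finally show ?thesis .
qed

lemma conv_cstar_bisection_d:
  assumes B: "bisection G B" and a_0: "\<And>z. z \<notin> B \<Longrightarrow> a z = 0" and b: "b \<in> B"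
  shows "conv G (cstar G a) a (d b) = cnj (a b) * a b"
proof -
  have "cstar G a \<eta> * a (mul (iv \<eta>) (d b)) = 0" if "r \<eta> = r (d b)" "\<eta> \<noteq> iv b" for \<eta>
  proof (cases "iv \<eta> \<in> B")
    case True
    have "d (iv \<eta>) = d b" using that by simp
    then have "iv \<eta> = b" using B True b unfolding bisection_def inj_on_def by blast
    then show ?thesis using that by auto
  qed (simp add: cstar_def a_0)
  then have "conv G (cstar G a) a (d b) = (\<Sum>\<^sub>\<infinity>\<eta>\<in>{iv b}. cstar G a \<eta> * a (mul (iv \<eta>) (d b)))"
    unfolding conv_def by (intro infsum_cong_neutral) auto
  then show ?thesis by (simp add: cstar_def)
qed

lemma conv_cstar_bisection_off_d:
  assumes B: "bisection G B" and a_0: "\<And>z. z \<notin> B \<Longrightarrow> a z = 0" and \<gamma>: "\<gamma> \<notin> d ` B"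
  shows "conv G (cstar G a) a \<gamma> = 0"
proof -
  have "cstar G a \<eta> * a (mul (iv \<eta>) \<gamma>) = 0" if "r \<eta> = r \<gamma>" for \<eta>
  proof (rule ccontr)
    assume "cstar G a \<eta> * a (mul (iv \<eta>) \<gamma>) \<noteq> 0"
    then have i1: "iv \<eta> \<in> B" and i2: "mul (iv \<eta>) \<gamma> \<in> B" using a_0 by (auto simp: cstar_def)
    have "r (mul (iv \<eta>) \<gamma>) = r (iv \<eta>)" by (rule r_mul) (simp add: that)
    then have "mul (iv \<eta>) \<gamma> = iv \<eta>" using B i1 i2 unfolding bisection_def inj_on_def by blast
    also have "\<dots> = mul (iv \<eta>) (d (iv \<eta>))" by (rule mul_d[symmetric])
    finally have "\<gamma> = d (iv \<eta>)" by (rule mul_left_cancel[rotated 2]) (simp_all add: that)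
    then show False using \<gamma> i1 by blast
  qed
  then show ?thesis unfolding conv_def by (intro infsum_0) auto
qed

end

section \<open>Compactly supported functions and C_0 on bisections\<close>

lemma Cc_on_vanishes:
  assumes "f \<in> Cc_on U" "x \<notin> U" shows "f x = 0"
proof -
  have "x \<notin> closure {x. f x \<noteq> 0}" using assms unfolding Cc_on_def by blast
  then show ?thesis using closure_subset[of "{x. f x \<noteq> 0}"] by blast
qed

lemma Cc_on_bounded:
  assumes "f \<in> Cc_on U" shows "bounded (range f)"
proof -
  let ?K = "closure {x. f x \<noteq> 0}"
  have K: "compact ?K" and c: "continuous_on UNIV f" using assms unfolding Cc_on_def by auto
  have "compact (f ` ?K)" by (rule compact_continuous_image[OF continuous_on_subset[OF c] K]) simp
  then have "bounded (insert 0 (f ` ?K))" by (simp add: compact_imp_bounded)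
  moreover have "range f \<subseteq> insert 0 (f ` ?K)" using closure_subset[of "{x. f x \<noteq> 0}"] by auto
  ultimately show ?thesis by (rule bounded_subset)
qed

lemma compact_closure_support_subset:
  fixes h :: "'a::t2_space \<Rightarrow> 'b::zero"
  assumes "compact K" "{x. h x \<noteq> 0} \<subseteq> K" "K \<subseteq> U"
  shows "compact (closure {x. h x \<noteq> 0}) \<and> closure {x. h x \<noteq> 0} \<subseteq> U"
proof -
  have cl: "closure {x. h x \<noteq> 0} \<subseteq> K" by (rule closure_minimal[OF assms(2) compact_imp_closed[OF assms(1)]])
  have "compact (K \<inter> closure {x. h x \<noteq> 0})" by (rule compact_Int_closed[OF assms(1) closed_closure])
  then show ?thesis using cl assms(3) by (simp add: Int_absorb1)
qed

lemma Cc_on_lincomb: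
  fixes U :: "'a::t2_space set"
  assumes f: "f \<in> Cc_on U" and g: "g \<in> Cc_on U"
  shows "(\<lambda>x. a * f x + b * g x) \<in> Cc_on U"
proof -
  let ?K = "closure {x. f x \<noteq> 0} \<union> closure {x. g x \<noteq> 0}"
  have "{x. a * f x + b * g x \<noteq> 0} \<subseteq> {x. f x \<noteq> 0} \<union> {x. g x \<noteq> 0}" by auto
  then have "{x. a * f x + b * g x \<noteq> 0} \<subseteq> ?K"
    using closure_subset[of "{x. f x \<noteq> 0}"] closure_subset[of "{x. g x \<noteq> 0}"] by blast
  moreover have "compact ?K" "?K \<subseteq> U" using f g unfolding Cc_on_def by auto
  ultimately have "compact (closure {x. a * f x + b * g x \<noteq> 0}) \<and>
      closure {x. a * f x + b * g x \<noteq> 0} \<subseteq> U"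
    by (intro compact_closure_support_subset)
  moreover have "continuous_on UNIV (\<lambda>x. a * f x + b * g x)"
    using f g unfolding Cc_on_def by (intro continuous_intros) auto
  ultimately show ?thesis unfolding Cc_on_def by simp
qed

lemma Cc_on_mult_cutoff:
  fixes W :: "'a::t2_space set"
  assumes f: "f \<in> Cc_on U" and k: "continuous_on UNIV k" "compact (closure {x. k x \<noteq> 0})"
    "closure {x. (k x::real) \<noteq> 0} \<subseteq> W"
  shows "(\<lambda>x. f x * of_real (k x)) \<in> Cc_on W"
proof -
  have "{x. f x * of_real (k x) \<noteq> 0} \<subseteq> closure {x. k x \<noteq> 0}"
    using closure_subset[of "{x. k x \<noteq> 0}"] by auto
  then have "compact (closure {x. f x * of_real (k x) \<noteq> 0}) \<and>
      closure {x. f x * of_real (k x) \<noteq> 0} \<subseteq> W"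
    by (rule compact_closure_support_subset[OF k(2) _ k(3)])
  moreover have "continuous_on UNIV (\<lambda>x. f x * of_real (k x))"
    using f k unfolding Cc_on_def by (intro continuous_intros) auto
  ultimately show ?thesis unfolding Cc_on_def by simp
qed

lemma Cc_on_mono: "U \<subseteq> U' \<Longrightarrow> Cc_on U \<subseteq> Cc_on U'"
  unfolding Cc_on_def by (intro Collect_mono) (meson order_trans)

lemma C0_mono: "U \<subseteq> U' \<Longrightarrow> C0 G U \<subseteq> C0 G U'"
  unfolding C0_def by (intro Collect_mono) (meson Cc_on_mono subsetD)

lemma C0_vanishes:
  assumes "f \<in> C0 G U" "x \<notin> U" shows "f x = 0"
proof -
  obtain s where s: "\<And>n. s n \<in> Cc_on U" "(\<lambda>n. s n x) \<longlonglongrightarrow> f x" using assms(1) unfolding C0_def by blast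
  then have "(\<lambda>n. 0) \<longlonglongrightarrow> f x" using Cc_on_vanishes[OF s(1) assms(2)] by simp
  then show ?thesis using LIMSEQ_unique[OF _ tendsto_const] by metis
qed

lemma uniform_limit_precompose:
  assumes "uniform_limit UNIV f l F"
  shows "uniform_limit UNIV (\<lambda>k x. f k (g x)) (\<lambda>x. l (g x)) F"
proof (rule uniform_limitI)
  fix e :: real assume "e > 0"
  with assms have "\<forall>\<^sub>F n in F. \<forall>x\<in>UNIV. dist (f n x) (l x) < e" by (rule uniform_limitD)
  then show "\<forall>\<^sub>F n in F. \<forall>x\<in>UNIV. dist (f n (g x)) (l (g x)) < e" by (rule eventually_mono) blast
qed

lemma uniformly_Cauchy_on_UNIV_iff:
  "uniformly_Cauchy_on UNIV s \<longleftrightarrow> (\<forall>e>0. \<exists>N. \<forall>m\<ge>N. \<forall>k\<ge>N. \<forall>\<gamma>. cmod (s m \<gamma> - s k \<gamma>) < e)"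
  unfolding uniformly_Cauchy_on_def dist_norm by blast

context groupoid_laws begin

lemma norm_diff_le_rnorm_Cc_on:
  assumes B: "bisection G B" and f: "f \<in> Cc_on B" and g: "g \<in> Cc_on B" and \<gamma>: "\<gamma> \<in> B"
  shows "cmod (f \<gamma> - g \<gamma>) \<le> rnorm G (\<lambda>\<gamma>. f \<gamma> - g \<gamma>)"
proof -
  obtain M1 M2 where "\<And>x. cmod (f x) \<le> M1" "\<And>x. cmod (g x) \<le> M2"
    using Cc_on_bounded[OF f] Cc_on_bounded[OF g] unfolding bounded_iff by blast
  then have "cmod (f x - g x) \<le> M1 + M2" for x
    using norm_triangle_ineq4[of "f x" "g x"] by (smt (verit))
  then show ?thesis
    by (intro norm_le_rnorm_bisection[where f="\<lambda>\<gamma>. f \<gamma> - g \<gamma>", OF B _ _ \<gamma>])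
      (use Cc_on_vanishes[OF f] Cc_on_vanishes[OF g] in auto)
qed

text \<open>On a bisection the reduced norm is the sup norm, so Cauchy sequences for the two norms agree.\<close>

lemma C0_bisection_iff_uniformly_Cauchy:
  assumes B: "bisection G B"
  shows "f \<in> C0 G B \<longleftrightarrow> (\<exists>s. (\<forall>k. s k \<in> Cc_on B) \<and> uniformly_Cauchy_on UNIV s \<and>
    (\<forall>\<gamma>. (\<lambda>k. s k \<gamma>) \<longlonglongrightarrow> f \<gamma>))"
proof -
  have rnorm_le: "rnorm G (\<lambda>\<gamma>. s m \<gamma> - s k \<gamma>) \<le> e"
    if s: "\<And>n. s n \<in> Cc_on B" and e: "\<And>\<gamma>. cmod (s m \<gamma> - s k \<gamma>) \<le> e" for s m k e
    by (rule rnorm_bisection_le[OF B]) (use e Cc_on_vanishes[OF s] in auto)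
  show ?thesis
  proof
    assume "f \<in> C0 G B"
    then obtain s where s: "\<And>n. s n \<in> Cc_on B" "\<And>\<gamma>. (\<lambda>n. s n \<gamma>) \<longlonglongrightarrow> f \<gamma>"
      and Cauchy: "\<forall>e>0. \<exists>N. \<forall>m\<ge>N. \<forall>n\<ge>N. rnorm G (\<lambda>\<gamma>. s m \<gamma> - s n \<gamma>) < e"
      unfolding C0_def by blast
    have "\<exists>N. \<forall>m\<ge>N. \<forall>k\<ge>N. \<forall>\<gamma>. cmod (s m \<gamma> - s k \<gamma>) < e" if "e > 0" for e
    proof -
      obtain N where N: "\<forall>m\<ge>N. \<forall>k\<ge>N. rnorm G (\<lambda>\<gamma>. s m \<gamma> - s k \<gamma>) < e"
        using Cauchy \<open>e > 0\<close> by blast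
      have "cmod (s m \<gamma> - s k \<gamma>) < e" if "m \<ge> N" "k \<ge> N" for m k \<gamma>
      proof (cases "\<gamma> \<in> B")
        case True then show ?thesis
          using N norm_diff_le_rnorm_Cc_on[OF B s(1) s(1) True] that by (meson le_less_trans)
      qed (use Cc_on_vanishes[OF s(1)] \<open>e > 0\<close> in simp)
      then show ?thesis by blast
    qed
    then have "uniformly_Cauchy_on UNIV s" unfolding uniformly_Cauchy_on_UNIV_iff by blast
    then show "\<exists>s. (\<forall>k. s k \<in> Cc_on B) \<and> uniformly_Cauchy_on UNIV s \<and>
        (\<forall>\<gamma>. (\<lambda>k. s k \<gamma>) \<longlonglongrightarrow> f \<gamma>)"
      using s by blast
  next
    assume "\<exists>s. (\<forall>k. s k \<in> Cc_on B) \<and> uniformly_Cauchy_on UNIV s \<and>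
      (\<forall>\<gamma>. (\<lambda>k. s k \<gamma>) \<longlonglongrightarrow> f \<gamma>)"
    then obtain s where s: "\<And>n. s n \<in> Cc_on B" "\<And>\<gamma>. (\<lambda>n. s n \<gamma>) \<longlonglongrightarrow> f \<gamma>"
      and Cauchy: "\<forall>e>0. \<exists>N. \<forall>m\<ge>N. \<forall>k\<ge>N. \<forall>\<gamma>. cmod (s m \<gamma> - s k \<gamma>) < e"
      unfolding uniformly_Cauchy_on_UNIV_iff by blast
    have "\<exists>N. \<forall>m\<ge>N. \<forall>n\<ge>N. rnorm G (\<lambda>\<gamma>. s m \<gamma> - s n \<gamma>) < e" if "e > 0" for e
    proof -
      obtain N where "\<forall>m\<ge>N. \<forall>k\<ge>N. \<forall>\<gamma>. cmod (s m \<gamma> - s k \<gamma>) < e / 2"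
        using Cauchy \<open>e > 0\<close> half_gt_zero by blast
      then have "\<forall>m\<ge>N. \<forall>n\<ge>N. rnorm G (\<lambda>\<gamma>. s m \<gamma> - s n \<gamma>) \<le> e / 2"
        using rnorm_le[of s, OF s(1)] by (meson less_imp_le)
      moreover have "e / 2 < e" using \<open>e > 0\<close> by simp
      ultimately show ?thesis by (meson le_less_trans)
    qed
    then show "f \<in> C0 G B" unfolding C0_def using s by blast
  qed
qed

lemma C0_bisection_iff_uniform_limit:
  assumes B: "bisection G B"
  shows "f \<in> C0 G B \<longleftrightarrow> (\<exists>s. (\<forall>k. s k \<in> Cc_on B) \<and> uniform_limit UNIV s f sequentially)"
proof -
  have "uniformly_Cauchy_on UNIV s \<and> (\<forall>\<gamma>. (\<lambda>k. s k \<gamma>) \<longlonglongrightarrow> f \<gamma>) \<longleftrightarrow>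
      uniform_limit UNIV s f sequentially" for s :: "nat \<Rightarrow> 'a \<Rightarrow> complex"
  proof
    assume s: "uniformly_Cauchy_on UNIV s \<and> (\<forall>\<gamma>. (\<lambda>k. s k \<gamma>) \<longlonglongrightarrow> f \<gamma>)"
    then have "uniform_limit UNIV s (\<lambda>\<gamma>. lim (\<lambda>k. s k \<gamma>)) sequentially"
      using Cauchy_uniformly_convergent uniformly_convergent_uniform_limit_iff by blast
    moreover have "lim (\<lambda>k. s k \<gamma>) = f \<gamma>" for \<gamma> using s by (simp add: limI)
    ultimately show "uniform_limit UNIV s f sequentially" by simp
  next
    assume s: "uniform_limit UNIV s f sequentially"
    then show "uniformly_Cauchy_on UNIV s \<and> (\<forall>\<gamma>. (\<lambda>k. s k \<gamma>) \<longlonglongrightarrow> f \<gamma>)"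
      using tendsto_uniform_limitI[OF s] uniformly_convergent_Cauchy[OF uniformly_convergentI] by blast
  qed
  then show ?thesis unfolding C0_bisection_iff_uniformly_Cauchy[OF B] by blast
qed

lemma C0_bisection_bounded:
  assumes B: "bisection G B" and f: "f \<in> C0 G B" shows "bounded (range f)"
proof -
  obtain s where s: "\<And>k. s k \<in> Cc_on B" "uniform_limit UNIV s f sequentially"
    using f C0_bisection_iff_uniform_limit[OF B] by blast
  show ?thesis by (rule uniform_limit_bounded[OF s(2)]) (auto intro!: always_eventually Cc_on_bounded s(1))
qed

lemma C0_lincomb:
  assumes B: "bisection G B" and f: "f \<in> C0 G B" and g: "g \<in> C0 G B"
  shows "(\<lambda>\<gamma>. x * f \<gamma> + y * g \<gamma>) \<in> C0 G B"
proof -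
  obtain s where s: "\<And>k. s k \<in> Cc_on B" "uniform_limit UNIV s f sequentially"
    using f C0_bisection_iff_uniform_limit[OF B] by blast
  obtain t where t: "\<And>k. t k \<in> Cc_on B" "uniform_limit UNIV t g sequentially"
    using g C0_bisection_iff_uniform_limit[OF B] by blast
  have "uniform_limit UNIV (\<lambda>k \<gamma>. x * s k \<gamma> + y * t k \<gamma>) (\<lambda>\<gamma>. x * f \<gamma> + y * g \<gamma>) sequentially"
    by (intro uniform_limit_intros s(2) t(2))
  moreover have "(\<lambda>\<gamma>. x * s k \<gamma> + y * t k \<gamma>) \<in> Cc_on B" for k by (rule Cc_on_lincomb[OF s(1)[of k] t(1)[of k]])
  ultimately show ?thesis unfolding C0_bisection_iff_uniform_limit[OF B] by (intro exI conjI allI)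
qed

lemma C0_mult_cutoff:
  assumes U: "bisection G U" and W: "bisection G W" and n: "n \<in> C0 G U"
    and k: "continuous_on UNIV k" "compact (closure {x. k x \<noteq> 0})"
      "closure {x. (k x::real) \<noteq> 0} \<subseteq> W" "\<And>x. \<bar>k x\<bar> \<le> 1"
  shows "(\<lambda>\<gamma>. n \<gamma> * of_real (k \<gamma>)) \<in> C0 G W"
proof -
  obtain s where s: "\<And>j. s j \<in> Cc_on U" "uniform_limit UNIV s n sequentially"
    using n C0_bisection_iff_uniform_limit[OF U] by blast
  have "bounded (range (\<lambda>\<gamma>. complex_of_real (k \<gamma>)))"
    using k(4) unfolding bounded_iff by auto
  then have "uniform_limit UNIV (\<lambda>j \<gamma>. s j \<gamma> * of_real (k \<gamma>)) (\<lambda>\<gamma>. n \<gamma> * of_real (k \<gamma>)) sequentially"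
    by (rule uniform_lim_mult[OF s(2) uniform_limit_const C0_bisection_bounded[OF U n]])
  moreover have "(\<lambda>\<gamma>. s j \<gamma> * of_real (k \<gamma>)) \<in> Cc_on W" for j
    by (rule Cc_on_mult_cutoff[OF s(1)[of j] k(1-3)])
  ultimately show ?thesis unfolding C0_bisection_iff_uniform_limit[OF W] by (intro exI conjI allI)
qed

end

locale etale =
  fixes G :: "('a::t2_space, 'm) groupoid_scheme"
  assumes etale_groupoid: "etale_groupoid G"

sublocale etale \<subseteq> groupoid_laws
  using etale_groupoid unfolding etale_groupoid_def by unfold_locales blast

context etale begin

lemma continuous_on_d: "continuous_on UNIV d" and continuous_on_iv: "continuous_on UNIV iv"
  and locally_compact: "locally_compact_space (euclidean :: 'a topology)"
  using etale_groupoid unfolding etale_groupoid_def by auto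

lemma open_image_d:
  assumes S: "open S" shows "open (d ` S)"
proof (subst open_subopen, intro ballI)
  fix y assume "y \<in> d ` S"
  then obtain g where g: "g \<in> S" "y = d g" by blast
  obtain V e where V: "open V" "g \<in> V" "open (d ` V)" "homeomorphism V (d ` V) d e"
    using etale_groupoid unfolding etale_groupoid_def by metis
  have "openin (top_of_set V) (S \<inter> V)" using S by (simp add: openin_open) blast
  then have "openin (top_of_set (d ` V)) (d ` (S \<inter> V))" by (rule homeomorphism_imp_open_map[OF V(4)])
  then have "open (d ` (S \<inter> V))" using V(3) by (rule openin_open_trans)
  then show "\<exists>T. open T \<and> y \<in> T \<and> T \<subseteq> d ` S" using g V by blast
qed

lemma Bis_homeomorphism_d:
  assumes U: "U \<in> Bis G"
  obtains e where "homeomorphism U (d ` U) d e" "open (d ` U)"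
proof -
  have oU: "open U" and inj: "inj_on d U" using U unfolding Bis_def by auto
  have "openin (top_of_set (d ` U)) (d ` V)" if "openin (top_of_set U) V" for V
  proof -
    have "open (d ` V)" using openin_open_trans[OF that oU] by (rule open_image_d)
    moreover have "d ` V \<subseteq> d ` U" using openin_imp_subset[OF that] by blast
    ultimately show ?thesis by (metis Int_absorb1 openin_open_Int inf.commute)
  qed
  then obtain e where "homeomorphism U (d ` U) d e"
    using homeomorphism_injective_open_map[OF continuous_on_subset[OF continuous_on_d] refl inj] by auto
  then show ?thesis using that open_image_d[OF oU] by blast
qed

lemma Cc_on_cstar:
  assumes s: "s \<in> Cc_on U" shows "cstar G s \<in> Cc_on (iv ` U)"
proof -
  let ?K = "closure {x. s x \<noteq> 0}"
  have K: "compact ?K" "?K \<subseteq> U" and cs: "continuous_on UNIV s" using s unfolding Cc_on_def by auto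
  have "{x. cstar G s x \<noteq> 0} \<subseteq> iv ` ?K"
  proof
    fix x assume "x \<in> {x. cstar G s x \<noteq> 0}"
    then have "iv x \<in> {x. s x \<noteq> 0}" by (simp add: cstar_def)
    then have "iv x \<in> ?K" using closure_subset by (rule subsetD[rotated])
    then have "iv (iv x) \<in> iv ` ?K" by (rule imageI)
    then show "x \<in> iv ` ?K" by simp
  qed
  moreover have "compact (iv ` ?K)"
    by (rule compact_continuous_image[OF continuous_on_subset[OF continuous_on_iv] K(1)]) simp
  ultimately have "compact (closure {x. cstar G s x \<noteq> 0}) \<and> closure {x. cstar G s x \<noteq> 0} \<subseteq> iv ` U"
    using K(2) by (intro compact_closure_support_subset) auto
  moreover have "continuous_on UNIV (cstar G s)"
    using continuous_on_compose[OF continuous_on_iv continuous_on_subset[OF cs]]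
    unfolding cstar_def comp_def by (intro continuous_intros) simp
  ultimately show ?thesis unfolding Cc_on_def by simp
qed

lemma C0_cstar:
  assumes U: "bisection G U" and n: "n \<in> C0 G U" shows "cstar G n \<in> C0 G (iv ` U)"
proof -
  obtain s where s: "\<And>k. s k \<in> Cc_on U" "uniform_limit UNIV s n sequentially"
    using n C0_bisection_iff_uniform_limit[OF U] by blast
  have "uniform_limit UNIV (\<lambda>k \<gamma>. cnj (s k (iv \<gamma>))) (\<lambda>\<gamma>. cnj (n (iv \<gamma>))) sequentially"
    by (rule bounded_linear.uniform_limit[OF bounded_linear_cnj uniform_limit_precompose[OF s(2)]])
  moreover have "cstar G (s k) \<in> Cc_on (iv ` U)" for k by (rule Cc_on_cstar[OF s(1)[of k]])
  ultimately show ?thesis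
    unfolding C0_bisection_iff_uniform_limit[OF bisection_iv_image[OF U]] cstar_def by (intro exI conjI allI)
qed

lemma conv_cstar_bisection_eq:
  assumes B: "bisection G B" and a_0: "\<And>z. z \<notin> B \<Longrightarrow> a z = 0"
    and e: "\<And>y. y \<in> d ` B \<Longrightarrow> e y \<in> B \<and> d (e y) = y"
  shows "conv G (cstar G a) a \<gamma> = of_bool (\<gamma> \<in> d ` B) * (cnj (a (e \<gamma>)) * a (e \<gamma>))"
proof (cases "\<gamma> \<in> d ` B")
  case True
  then show ?thesis using conv_cstar_bisection_d[where a=a, OF B a_0, of "e \<gamma>"] e[OF True] by simp
qed (simp add: conv_cstar_bisection_off_d[where a=a, OF B a_0])

lemma Cc_on_conv_cstar:
  assumes U: "U \<in> Bis G" and s: "s \<in> Cc_on U"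
  shows "conv G (cstar G s) s \<in> Cc_on (gunits G)"
proof -
  obtain e where hom: "homeomorphism U (d ` U) d e" and odU: "open (d ` U)"
    using Bis_homeomorphism_d[OF U] by blast
  have e: "\<And>y. y \<in> d ` U \<Longrightarrow> e y \<in> U \<and> d (e y) = y" and ce: "continuous_on (d ` U) e"
    using hom unfolding homeomorphism_def by auto
  let ?K = "closure {x. s x \<noteq> 0}" and ?Q = "conv G (cstar G s) s"
  have Q: "?Q \<gamma> = of_bool (\<gamma> \<in> d ` U) * (cnj (s (e \<gamma>)) * s (e \<gamma>))" for \<gamma>
    by (rule conv_cstar_bisection_eq[where a=s, OF Bis_imp_bisection[OF U] Cc_on_vanishes[OF s] e])
  have K: "compact ?K" "?K \<subseteq> U" and cs: "continuous_on UNIV s" using s unfolding Cc_on_def by auto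
  have cdK: "compact (d ` ?K)"
    by (rule compact_continuous_image[OF continuous_on_subset[OF continuous_on_d] K(1)]) simp
  have supp: "{x. ?Q x \<noteq> 0} \<subseteq> d ` ?K"
  proof
    fix x assume "x \<in> {x. ?Q x \<noteq> 0}"
    then have x: "x \<in> d ` U" "s (e x) \<noteq> 0" using Q[of x] by (auto split: if_splits)
    then have "e x \<in> ?K" using closure_subset[of "{x. s x \<noteq> 0}"] by blast
    then have "d (e x) \<in> d ` ?K" by (rule imageI)
    then show "x \<in> d ` ?K" using e[OF x(1)] by simp
  qed
  have c1: "continuous_on (d ` U) ?Q"
  proof -
    have "continuous_on (d ` U) (\<lambda>\<gamma>. cnj (s (e \<gamma>)) * s (e \<gamma>))"
      using continuous_on_compose[OF ce continuous_on_subset[OF cs]] unfolding comp_def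
      by (intro continuous_intros) simp_all
    then show ?thesis by (rule continuous_on_cong[THEN iffD1, rotated 2]) (simp_all add: Q)
  qed
  have c2: "continuous_on (- (d ` ?K)) ?Q"
  proof -
    have "?Q \<gamma> = 0" if "\<gamma> \<in> - (d ` ?K)" for \<gamma> using supp that by blast
    then show ?thesis by (intro continuous_on_eq[OF continuous_on_const[of _ 0]]) simp
  qed
  have "d ` U \<union> - (d ` ?K) = UNIV" using K(2) by blast
  then have "continuous_on UNIV ?Q"
    using continuous_on_open_Un[OF odU _ c1 c2] compact_imp_closed[OF cdK] by (simp add: open_Compl)
  moreover have "compact (closure {x. ?Q x \<noteq> 0}) \<and> closure {x. ?Q x \<noteq> 0} \<subseteq> gunits G"
    by (rule compact_closure_support_subset[OF cdK supp]) auto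
  ultimately show ?thesis unfolding Cc_on_def by simp
qed

lemma C0_conv_cstar:
  assumes U: "U \<in> Bis G" and n: "n \<in> C0 G U"
  shows "conv G (cstar G n) n \<in> C0 G (gunits G)"
proof -
  have B: "bisection G U" using U by (rule Bis_imp_bisection)
  obtain e where "homeomorphism U (d ` U) d e" using Bis_homeomorphism_d[OF U] by blast
  then have e: "\<And>y. y \<in> d ` U \<Longrightarrow> e y \<in> U \<and> d (e y) = y" unfolding homeomorphism_def by auto
  obtain s where s: "\<And>k. s k \<in> Cc_on U" "uniform_limit UNIV s n sequentially"
    using n C0_bisection_iff_uniform_limit[OF B] by blast
  define \<iota> :: "'a \<Rightarrow> complex" where "\<iota> \<gamma> = of_bool (\<gamma> \<in> d ` U)" for \<gamma>
  have conv_s: "conv G (cstar G (s k)) (s k) = (\<lambda>\<gamma>. \<iota> \<gamma> * (cnj (s k (e \<gamma>)) * s k (e \<gamma>)))" for k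
    unfolding \<iota>_def by (rule ext, rule conv_cstar_bisection_eq[where a="s k", OF B Cc_on_vanishes[OF s(1)] e])
  have conv_n: "conv G (cstar G n) n = (\<lambda>\<gamma>. \<iota> \<gamma> * (cnj (n (e \<gamma>)) * n (e \<gamma>)))"
    unfolding \<iota>_def by (rule ext, rule conv_cstar_bisection_eq[where a=n, OF B C0_vanishes[OF n] e])
  obtain M where M: "\<And>\<gamma>. cmod (n \<gamma>) \<le> M"
    using C0_bisection_bounded[OF B n] unfolding bounded_iff by blast
  have "uniform_limit UNIV (\<lambda>k \<gamma>. cnj (s k \<gamma>) * s k \<gamma>) (\<lambda>\<gamma>. cnj (n \<gamma>) * n \<gamma>) sequentially"
    using M by (intro uniform_lim_mult[OF bounded_linear.uniform_limit[OF bounded_linear_cnj s(2)] s(2)])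
      (auto simp: bounded_iff)
  then have "uniform_limit UNIV (\<lambda>k \<gamma>. cnj (s k (e \<gamma>)) * s k (e \<gamma>)) (\<lambda>\<gamma>. cnj (n (e \<gamma>)) * n (e \<gamma>))
      sequentially"
    by (rule uniform_limit_precompose)
  moreover have "bounded (range \<iota>)" unfolding \<iota>_def bounded_iff by (intro exI[of _ 1]) simp
  moreover have "bounded (range (\<lambda>\<gamma>. cnj (n (e \<gamma>)) * n (e \<gamma>)))"
    using mult_mono'[OF M M norm_ge_zero norm_ge_zero] unfolding bounded_iff by (auto simp: norm_mult)
  ultimately have "uniform_limit UNIV (\<lambda>k. conv G (cstar G (s k)) (s k)) (conv G (cstar G n) n) sequentially"
    unfolding conv_s conv_n by (intro uniform_lim_mult[OF uniform_limit_const])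
  moreover have "conv G (cstar G (s k)) (s k) \<in> Cc_on (gunits G)" for k
    by (rule Cc_on_conv_cstar[OF U s(1)[of k]])
  ultimately show ?thesis
    unfolding C0_bisection_iff_uniform_limit[OF bisection_units] by (intro exI conjI allI)
qed

end

section \<open>The induced homomorphism at \<Phi>(\<alpha>)\<close>

lemma star_hom_lincomb:
  assumes hom: "star_hom G H \<phi>" and a: "a \<in> Cr G" "(\<lambda>\<gamma>. x * a \<gamma>) \<in> Cr G"
    and b: "b \<in> Cr G" "(\<lambda>\<gamma>. y * b \<gamma>) \<in> Cr G"
  shows "\<phi> (\<lambda>\<gamma>. x * a \<gamma> + y * b \<gamma>) = (\<lambda>\<delta>. x * \<phi> a \<delta> + y * \<phi> b \<delta>)"
proof -
  have "\<forall>a\<in>Cr G. \<forall>b\<in>Cr G. \<phi> (\<lambda>\<gamma>. a \<gamma> + b \<gamma>) = (\<lambda>\<delta>. \<phi> a \<delta> + \<phi> b \<delta>)"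
    using hom unfolding star_hom_def by blast
  then have "\<phi> (\<lambda>\<gamma>. x * a \<gamma> + y * b \<gamma>) = (\<lambda>\<delta>. \<phi> (\<lambda>\<gamma>. x * a \<gamma>) \<delta> + \<phi> (\<lambda>\<gamma>. y * b \<gamma>) \<delta>)"
    using a(2) b(2) by simp
  moreover have "\<phi> (\<lambda>\<gamma>. x * a \<gamma>) = (\<lambda>\<delta>. x * \<phi> a \<delta>)" "\<phi> (\<lambda>\<gamma>. y * b \<gamma>) = (\<lambda>\<delta>. y * \<phi> b \<delta>)"
    using hom a(1) b(1) unfolding star_hom_def by blast+
  ultimately show ?thesis by simp
qed

locale induced_groupoid_hom =
  fixes G :: "'a::t2_space groupoid" and H :: "'b::t2_space groupoid"
    and \<phi> :: "('a \<Rightarrow> complex) \<Rightarrow> ('b \<Rightarrow> complex)"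
    and \<psi> :: "'a set \<Rightarrow> 'b set" and \<sigma> :: "'a \<Rightarrow> 'b" and F :: "'a set" and \<Phi> :: "'a \<Rightarrow> 'b"
  assumes G_etale: "etale_groupoid G" and H_etale: "etale_groupoid H"
    and phi_hom: "star_hom G H \<phi>"
    and psi: "\<forall>W\<in>Bis G. \<psi> W \<in> Bis H \<and> \<phi> ` C0 G W = C0 H (\<psi> W)"
    and sigma_eval: "\<forall>f\<in>C0 G (gunits G). \<forall>x\<in>F. \<phi> f (\<sigma> x) = f x"
    and Phi: "\<forall>\<beta>. gdom G \<beta> \<in> F \<longrightarrow> (\<forall>W\<in>Bis G. \<beta> \<in> W \<longrightarrow>
               \<Phi> \<beta> \<in> \<psi> W \<and> gdom H (\<Phi> \<beta>) = \<sigma> (gdom G \<beta>))"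
begin

sublocale G: etale G by (rule etale.intro[OF G_etale])
sublocale H: etale H by (rule etale.intro[OF H_etale])

lemma cnj_mult_phi_at_Phi:
  assumes \<alpha>: "gdom G \<alpha> \<in> F" and U: "U \<in> Bis G" "\<alpha> \<in> U" and n: "n \<in> C0 G U"
  shows "cnj (\<phi> n (\<Phi> \<alpha>)) * \<phi> n (\<Phi> \<alpha>) = cnj (n \<alpha>) * n \<alpha>"
proof -
  have B: "bisection G U" using U(1) by (rule Bis_imp_bisection)
  have n_Cr: "n \<in> Cr G" using n C0_mono[of U UNIV G] by blast
  have "cstar G n \<in> Cr G" using G.C0_cstar[OF B n] C0_mono[of "ginv G ` U" UNIV G] by blast
  then have hom: "\<phi> (conv G (cstar G n) n) = conv H (cstar H (\<phi> n)) (\<phi> n)"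
    using phi_hom n_Cr unfolding star_hom_def by metis
  have "\<phi> (conv G (cstar G n) n) (\<sigma> (gdom G \<alpha>)) = conv G (cstar G n) n (gdom G \<alpha>)"
    using sigma_eval G.C0_conv_cstar[OF U(1) n] \<alpha> by blast
  also have "\<dots> = cnj (n \<alpha>) * n \<alpha>"
    by (rule G.conv_cstar_bisection_d[where a=n, OF B C0_vanishes[OF n] U(2)])
  finally have G_side: "\<phi> (conv G (cstar G n) n) (\<sigma> (gdom G \<alpha>)) = cnj (n \<alpha>) * n \<alpha>" .
  have \<psi>U: "\<psi> U \<in> Bis H" "\<phi> n \<in> C0 H (\<psi> U)" using psi U(1) n by auto
  have \<Phi>\<alpha>: "\<Phi> \<alpha> \<in> \<psi> U" "gdom H (\<Phi> \<alpha>) = \<sigma> (gdom G \<alpha>)" using Phi \<alpha> U by auto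
  have "conv H (cstar H (\<phi> n)) (\<phi> n) (gdom H (\<Phi> \<alpha>)) = cnj (\<phi> n (\<Phi> \<alpha>)) * \<phi> n (\<Phi> \<alpha>)"
    by (rule H.conv_cstar_bisection_d[OF Bis_imp_bisection[OF \<psi>U(1)] C0_vanishes[OF \<psi>U(2)] \<Phi>\<alpha>(1)])
  then show ?thesis using G_side hom \<Phi>\<alpha>(2) by simp
qed

lemma norm_phi_at_Phi:
  assumes "gdom G \<alpha> \<in> F" "U \<in> Bis G" "\<alpha> \<in> U" "n \<in> C0 G U"
  shows "cmod (\<phi> n (\<Phi> \<alpha>)) = cmod (n \<alpha>)"
proof -
  have "complex_of_real ((cmod (\<phi> n (\<Phi> \<alpha>)))\<^sup>2) = complex_of_real ((cmod (n \<alpha>))\<^sup>2)"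
    using cnj_mult_phi_at_Phi[OF assms] by (simp only: complex_norm_square mult.commute)
  then have "(cmod (\<phi> n (\<Phi> \<alpha>)))\<^sup>2 = (cmod (n \<alpha>))\<^sup>2" by (simp only: of_real_eq_iff)
  then show ?thesis by (simp add: power2_eq_iff_nonneg)
qed

text \<open>The combination b(\<alpha>) a - a(\<alpha>) b vanishes at \<alpha>, hence so does its image at \<Phi>(\<alpha>).\<close>

lemma phi_at_Phi_proportional:
  assumes \<alpha>: "gdom G \<alpha> \<in> F" and U: "U \<in> Bis G" "\<alpha> \<in> U" and a: "a \<in> C0 G U" and b: "b \<in> C0 G U"
  shows "\<phi> a (\<Phi> \<alpha>) * b \<alpha> = \<phi> b (\<Phi> \<alpha>) * a \<alpha>"
proof -
  have B: "bisection G U" using U(1) by (rule Bis_imp_bisection)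
  have scaled: "(\<lambda>\<gamma>. x * f \<gamma>) \<in> Cr G" if "f \<in> C0 G U" for x f
    using G.C0_lincomb[OF B that that, of x 0] C0_mono[of U UNIV G] by auto
  define c where "c = (\<lambda>\<gamma>. b \<alpha> * a \<gamma> + (- a \<alpha>) * b \<gamma>)"
  have "c \<in> C0 G U" unfolding c_def by (rule G.C0_lincomb[OF B a b])
  moreover have "c \<alpha> = 0" by (simp add: c_def)
  ultimately have "cnj (\<phi> c (\<Phi> \<alpha>)) * \<phi> c (\<Phi> \<alpha>) = 0" using cnj_mult_phi_at_Phi[OF \<alpha> U] by simp
  then have "\<phi> c (\<Phi> \<alpha>) = 0" by simp
  moreover have "\<phi> c = (\<lambda>\<delta>. b \<alpha> * \<phi> a \<delta> + (- a \<alpha>) * \<phi> b \<delta>)"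
    unfolding c_def using a b C0_mono[of U UNIV G]
    by (intro star_hom_lincomb[OF phi_hom] scaled) auto
  ultimately show ?thesis by (simp add: algebra_simps)
qed

lemma phi_at_Phi_div_eq:
  assumes \<alpha>: "gdom G \<alpha> \<in> F"
    and U: "U \<in> Bis G" "\<alpha> \<in> U" and n: "n \<in> C0 G U" "n \<alpha> \<noteq> 0"
    and U': "U' \<in> Bis G" "\<alpha> \<in> U'" and n': "n' \<in> C0 G U'" "n' \<alpha> \<noteq> 0"
  shows "\<phi> n' (\<Phi> \<alpha>) / n' \<alpha> = \<phi> n (\<Phi> \<alpha>) / n \<alpha>"
proof -
  define W where "W = U \<inter> U'"
  have W: "W \<in> Bis G" "\<alpha> \<in> W" "W \<subseteq> U" "W \<subseteq> U'"
    using U U' unfolding W_def Bis_def by (auto intro: inj_on_subset)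
  obtain k :: "'a \<Rightarrow> real" where k: "continuous_on UNIV k" "k \<alpha> = 1" "\<And>x. \<bar>k x\<bar> \<le> 1"
      "compact (closure {x. k x \<noteq> 0})" "closure {x. k x \<noteq> 0} \<subseteq> W"
    using exists_cutoff_function[OF G.locally_compact _ W(2)] W(1) unfolding Bis_def by blast
  define m m' where "m = (\<lambda>\<gamma>. n \<gamma> * of_real (k \<gamma>))" and "m' = (\<lambda>\<gamma>. n' \<gamma> * of_real (k \<gamma>))"
  have m: "m \<in> C0 G W" and m': "m' \<in> C0 G W" unfolding m_def m'_def using Bis_imp_bisection U(1) U'(1) W(1)
    by (blast intro: G.C0_mult_cutoff[OF _ _ n(1) k(1,4,5,3)] G.C0_mult_cutoff[OF _ _ n'(1) k(1,4,5,3)])+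
  have at_\<alpha>: "m \<alpha> = n \<alpha>" "m' \<alpha> = n' \<alpha>" unfolding m_def m'_def using k(2) by simp_all
  have "\<phi> n (\<Phi> \<alpha>) * m \<alpha> = \<phi> m (\<Phi> \<alpha>) * n \<alpha>"
    using m C0_mono[OF W(3)] by (intro phi_at_Phi_proportional[OF \<alpha> U n(1)]) blast
  then have m_eq: "\<phi> m (\<Phi> \<alpha>) = \<phi> n (\<Phi> \<alpha>)" using at_\<alpha> n(2) by simp
  have "\<phi> n' (\<Phi> \<alpha>) * m' \<alpha> = \<phi> m' (\<Phi> \<alpha>) * n' \<alpha>"
    using m' C0_mono[OF W(4)] by (intro phi_at_Phi_proportional[OF \<alpha> U' n'(1)]) blast
  then have m'_eq: "\<phi> m' (\<Phi> \<alpha>) = \<phi> n' (\<Phi> \<alpha>)" using at_\<alpha> n'(2) by simp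
  have "\<phi> m (\<Phi> \<alpha>) * m' \<alpha> = \<phi> m' (\<Phi> \<alpha>) * m \<alpha>" by (rule phi_at_Phi_proportional[OF \<alpha> W(1,2) m m'])
  then show ?thesis using m_eq m'_eq at_\<alpha> n(2) n'(2) by (simp add: field_simps)
qed

end

text \<open>Effectiveness of H, the description of F and of V are not needed: only their consequences
  psi, sigma_eval and Phi enter the argument.\<close>

theorem mainTheorem6:
  fixes G :: "'a::t2_space groupoid" and H :: "'b::t2_space groupoid"
    and \<phi> :: "('a \<Rightarrow> complex) \<Rightarrow> ('b \<Rightarrow> complex)"
    and F :: "'a set" and \<psi> :: "'a set \<Rightarrow> 'b set" and \<sigma> :: "'a \<Rightarrow> 'b" and V :: "'b set"
    and \<Phi> :: "'a \<Rightarrow> 'b"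
    and \<alpha> :: 'a and U :: "'a set" and n :: "'a \<Rightarrow> complex"
  assumes G_etale: "etale_groupoid G"
    and H_etale: "etale_groupoid H"
    and H_eff: "effective H"
    and phi_hom: "star_hom G H \<phi>"
    and phi_units: "\<phi> ` C0 G (gunits G) \<subseteq> C0 H (gunits H)"
    and phi_ideal: "\<forall>a\<in>\<phi> ` C0 G (gunits G). \<forall>b\<in>C0 H (gunits H).
                      conv H b a \<in> \<phi> ` C0 G (gunits G)"
    \<comment> \<open>F: the closed invariant set with ker phi \<inter> C_0(G0) = C_0(G0 \ F)\<close>
    and F_units: "F \<subseteq> gunits G" and F_closed: "closed F"
    and F_inv: "\<forall>g. gdom G g \<in> F \<longleftrightarrow> gran G g \<in> F"
    and F_ker: "{a \<in> C0 G (gunits G). \<phi> a = (\<lambda>_. 0)} = C0 G (gunits G - F)"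
    \<comment> \<open>psi: phi(C_0(U)) = C_0(psi(U)) for open bisections U\<close>
    and psi: "\<forall>W\<in>Bis G. \<psi> W \<in> Bis H \<and> \<phi> ` C0 G W = C0 H (\<psi> W)"
    \<comment> \<open>sigma: homeomorphism of F onto the open set V with phi(C_0(G0)) = C_0(V)\<close>
    and V_open: "open V" and V_units: "V \<subseteq> gunits H"
    and sigma_homeo: "\<exists>\<tau>. homeomorphism F V \<sigma> \<tau>"
    and phi_V: "\<phi> ` C0 G (gunits G) = C0 H V"
    and sigma_eval: "\<forall>f\<in>C0 G (gunits G). \<forall>x\<in>F. \<phi> f (\<sigma> x) = f x"
    \<comment> \<open>Phi on G_F = d^{-1}(F)\<close>
    and Phi: "\<forall>\<beta>. gdom G \<beta> \<in> F \<longrightarrow> (\<forall>W\<in>Bis G. \<beta> \<in> W \<longrightarrow>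
               \<Phi> \<beta> \<in> \<psi> W \<and> gdom H (\<Phi> \<beta>) = \<sigma> (gdom G \<beta>))"
    \<comment> \<open>the data of the theorem\<close>
    and alpha: "gdom G \<alpha> \<in> F"
    and U: "U \<in> Bis G" and alpha_U: "\<alpha> \<in> U"
    and n: "n \<in> C0 G U" and n_alpha: "n \<alpha> \<noteq> 0"
  shows "cmod (\<phi> n (\<Phi> \<alpha>)) = cmod (n \<alpha>) \<and>
         (\<forall>U' n'. U' \<in> Bis G \<longrightarrow> \<alpha> \<in> U' \<longrightarrow> n' \<in> C0 G U' \<longrightarrow> n' \<alpha> \<noteq> 0 \<longrightarrow>
            \<phi> n' (\<Phi> \<alpha>) / n' \<alpha> = \<phi> n (\<Phi> \<alpha>) / n \<alpha>)"
proof -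
  interpret induced_groupoid_hom G H \<phi> \<psi> \<sigma> F \<Phi>
    using G_etale H_etale phi_hom psi sigma_eval Phi by unfold_locales
  show ?thesis
    using norm_phi_at_Phi[OF alpha U alpha_U n] phi_at_Phi_div_eq[OF alpha U alpha_U n n_alpha] by blast
qed

end
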